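(* Assume CH. There exists a Sierpiński set $S\subseteq\mathbb{R}$ such that $S+S=\{a+b:a,b\in S\}$ is a Bernstein set.
   Context: A Sierpiński set is $S\subseteq\mathbb{R}$ with $|S|=\mathfrak{c}$ such that $S\cap N$ is countable for every Lebesgue-null $N\subseteq\mathbb{R}$. A set $B\subseteq\mathbb{R}$ is a Bernstein set if for every nonempty perfect set $P\subseteq\mathbb{R}$ both $B\cap P\neq\emptyset$ and $(\mathbb{R}\setminus B)\cap P\neq\emptyset$. *)

theory Defs
  imports "HOL-Analysis.Analysis" "HOL-Library.Equipollence"
begin

definition CH :: bool where
  "CH \<longleftrightarrow> (\<forall>A :: real set. uncountable A \<longrightarrow> A \<approx> (UNIV :: real set))"

definition perfect_set :: "real set \<Rightarrow> bool" where
  "perfect_set P \<longleftrightarrow> closed P \<and> (\<forall>x\<in>P. x islimpt P)"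

definition sierpinski_set :: "real set \<Rightarrow> bool" where
  "sierpinski_set S \<longleftrightarrow> S \<approx> (UNIV :: real set) \<and>
     (\<forall>N \<in> null_sets lebesgue. countable (S \<inter> N))"

definition bernstein_set :: "real set \<Rightarrow> bool" where
  "bernstein_set B \<longleftrightarrow> (\<forall>P. perfect_set P \<and> P \<noteq> {} \<longrightarrow>
     B \<inter> P \<noteq> {} \<and> (UNIV - B) \<inter> P \<noteq> {})"

end

theory Submission
  imports Defs
begin

text \<open>
  CH gives a well-ordering of the reals all of whose proper initial segments are countable.
  There are only continuum many sequences of open sets, so we can index by reals a family of
  null sets \<open>N a\<close> (negligible G-delta sets) covering every null set, and a family of uncountable
  sets \<open>P a\<close> containing every nonempty perfect set. By transfinite recursion along the ordering
  we choose at stage \<open>a\<close> reals \<open>s a\<close>, \<open>t a\<close>, \<open>d a\<close> such that \<open>d a \<in> P a\<close> is not a sum of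
  two earlier summands, \<open>s a + t a \<in> P a\<close>, the new summands avoid all \<open>N b\<close> with \<open>b \<le> a\<close>,
  and no new sum hits any \<open>d b\<close> with \<open>b \<le> a\<close>. Each stage has to avoid only countably many
  points and one null set, so the choices exist. Then \<open>S = range s \<union> range t\<close> meets every
  \<open>N a\<close> in a countable set, while \<open>S + S\<close> contains \<open>s a + t a \<in> P a\<close> and misses \<open>d a \<in> P a\<close>.
\<close>

unbundle cardinal_syntax

definition below :: "('i \<times> 'i) set \<Rightarrow> 'i \<Rightarrow> 'i set"
  where "below R a = {b. (b, a) \<in> R}"

text \<open>Under CH the cardinal well-order of the reals has only countable proper initial segments.\<close>

lemma CH_well_order_with_countable_initial_segments:
  assumes "CH"
  obtains R :: "(real \<times> real) set"
  where "wf R" "trans R" "total R" "\<And>a. countable (below R a)"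
proof
  let ?r = "|UNIV :: real set|"
  have wo: "Well_order ?r" and field: "Field ?r = UNIV"
    by (rule card_of_Well_order, rule Field_card_of)
  show "wf (?r - Id)"
    using wo by (simp add: wo_rel.WF wo_rel_def)
  show "trans (?r - Id)"
    using wo by (simp add: trans_diff_Id order_on_defs)
  show "total (?r - Id)"
    using wo field by (simp add: total_on_diff_Id order_on_defs)
  fix a
  have segment: "below (?r - Id) a = underS ?r a"
    by (auto simp: below_def underS_def)
  have "|underS ?r a| <o ?r"
    using card_of_underS[OF card_of_Card_order, of a "UNIV :: real set"] field by simp
  then have "\<not> underS ?r a \<approx> (UNIV :: real set)"
    using eqpoll_iff_card_of_ordIso not_ordLess_ordIso by blast
  then show "countable (below (?r - Id) a)"
    using assms segment unfolding CH_def by auto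
qed

text \<open>Sequences of sets of naturals (codes for sequences of open sets) can be indexed by reals.\<close>

lemma real_surj_onto_code_sequences: "\<exists>g :: real \<Rightarrow> (nat \<Rightarrow> nat set). surj g"
proof -
  define encode :: "(nat \<Rightarrow> nat set) \<Rightarrow> nat set"
    where "encode c = prod_encode ` (SIGMA n:UNIV. c n)" for c
  have "c n = {k. prod_encode (n, k) \<in> encode c}" for c n
    unfolding encode_def by auto
  then have "inj encode"
    by (metis injI ext)
  moreover obtain h :: "nat set \<Rightarrow> real" where "bij h"
    using nat_sets_eqpoll_reals unfolding eqpoll_def by blast
  ultimately have "inj (h \<circ> encode)"
    by (simp add: bij_betw_def inj_compose)
  then show ?thesis
    by (metis inv_f_f surjI)
qed

text \<open>Every sequence of open sets of reals occurs in a single real-indexed family, since every open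
  set is a union of members of a countable base.\<close>

lemma open_sequence_enumeration:
  "\<exists>G :: real \<Rightarrow> nat \<Rightarrow> real set. \<forall>U. (\<forall>n. open (U n)) \<longrightarrow> (\<exists>a. G a = U)"
proof -
  obtain B :: "nat \<Rightarrow> real set"
    where B: "\<And>S. open S \<Longrightarrow> \<exists>k. S = \<Union>{B n |n. n \<in> k}"
    by (rule univ_second_countable_sequence) blast
  obtain g :: "real \<Rightarrow> (nat \<Rightarrow> nat set)" where g: "surj g"
    using real_surj_onto_code_sequences by blast
  define G where "G a n = \<Union>{B m |m. m \<in> g a n}" for a n
  have "\<exists>a. G a = U" if "\<forall>n. open (U n)" for U
  proof -
    have "\<forall>n. \<exists>k. U n = \<Union>{B m |m. m \<in> k}"
      using B that by blast
    then have "\<exists>k. \<forall>n. U n = \<Union>{B m |m. m \<in> k n}"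
      by (rule choice)
    then obtain k where k: "\<And>n. U n = \<Union>{B m |m. m \<in> k n}"
      by blast
    obtain a where "g a = k"
      using g by (metis surjD)
    then have "G a = U"
      using k unfolding G_def by (simp add: fun_eq_iff)
    then show ?thesis ..
  qed
  then show ?thesis by blast
qed

lemma negligible_imp_subset_negligible_gdelta:
  fixes M :: "real set"
  assumes "negligible M"
  obtains U :: "nat \<Rightarrow> real set"
  where "\<And>n. open (U n)" "M \<subseteq> (\<Inter>n. U n)" "negligible (\<Inter>n. U n)"
proof -
  obtain C T where C: "gdelta C" "T \<in> null_sets lebesgue" "M \<union> T = C"
    using lebesgue_set_almost_gdelta negligible_imp_sets[OF assms] by metis
  then have "negligible C"
    using assms by (auto simp: negligible_iff_null_sets)
  from \<open>gdelta C\<close> obtain U :: "nat \<Rightarrow> real set" where "\<And>n. open (U n)" "C = (\<Inter>n. U n)"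
    by (cases rule: gdelta.cases) blast
  then show ?thesis
    using that C \<open>negligible C\<close> by blast
qed

text \<open>Nonempty perfect sets of reals are uncountable: the dense relatively open sets \<open>P - {x}\<close>
  would otherwise be countably many with empty intersection, contradicting Baire's theorem.\<close>

lemma perfect_set_uncountable:
  assumes "perfect_set P" "P \<noteq> {}"
  shows "uncountable P"
proof
  assume "countable P"
  have "closed P" and limpt: "\<And>x. x \<in> P \<Longrightarrow> x islimpt P"
    using assms(1) unfolding perfect_set_def by auto
  let ?G = "(\<lambda>x. P - {x}) ` P"
  have "P \<subseteq> closure (\<Inter>?G)"
  proof (rule Baire[OF \<open>closed P\<close>])
    show "countable ?G"
      using \<open>countable P\<close> by simp
    fix T assume "T \<in> ?G"
    then obtain x where x: "x \<in> P" "T = P - {x}" by blast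
    have "openin (top_of_set P) (P - {x})"
      by (simp add: openin_delete)
    moreover have "P \<subseteq> closure (P - {x})"
    proof
      fix y assume "y \<in> P"
      show "y \<in> closure (P - {x})"
      proof (cases "y = x")
        case True
        then show ?thesis
          using limpt[OF x(1)] by (simp add: islimpt_in_closure)
      next
        case False
        then show ?thesis
          using \<open>y \<in> P\<close> by (intro closure_subset[THEN subsetD]) simp
      qed
    qed
    ultimately show "openin (top_of_set P) T \<and> P \<subseteq> closure T"
      using x by simp
  qed
  moreover have "\<Inter>?G = {}"
    using assms(2) by auto
  ultimately show False
    using assms(2) by simp
qed

text \<open>Real-indexed null sets covering every null set (namely, the null G-delta sets).\<close>

lemma null_set_family:
  obtains N :: "real \<Rightarrow> real set"
  where "\<And>a. negligible (N a)" "\<And>M. negligible M \<Longrightarrow> \<exists>a. M \<subseteq> N a"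
proof -
  obtain G :: "real \<Rightarrow> nat \<Rightarrow> real set"
    where G: "\<And>U. (\<forall>n. open (U n)) \<Longrightarrow> \<exists>a. G a = U"
    using open_sequence_enumeration by metis
  define N where "N a = (if negligible (\<Inter>n. G a n) then \<Inter>n. G a n else {})" for a
  have "negligible (N a)" for a
    unfolding N_def by simp
  moreover have "\<exists>a. M \<subseteq> N a" if M: "negligible M" for M
  proof -
    obtain U :: "nat \<Rightarrow> real set"
      where U: "\<And>n. open (U n)" "M \<subseteq> (\<Inter>n. U n)" "negligible (\<Inter>n. U n)"
      using negligible_imp_subset_negligible_gdelta[OF M] by metis
    then obtain a where "G a = U"
      using G by blast
    then have "N a = (\<Inter>n. U n)"
      unfolding N_def using U(3) by simp
    then show ?thesis
      using U(2) by blast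
  qed
  ultimately show thesis
    by (rule that)
qed

text \<open>Real-indexed uncountable sets among which every nonempty perfect set occurs (a perfect set
  is the complement of an open set).\<close>

lemma perfect_set_family:
  obtains P :: "real \<Rightarrow> real set"
  where "\<And>a. uncountable (P a)" "\<And>Q. perfect_set Q \<Longrightarrow> Q \<noteq> {} \<Longrightarrow> \<exists>a. P a = Q"
proof -
  obtain G :: "real \<Rightarrow> nat \<Rightarrow> real set"
    where G: "\<And>U. (\<forall>n. open (U n)) \<Longrightarrow> \<exists>a. G a = U"
    using open_sequence_enumeration by metis
  define P where "P a = (if uncountable (- G a 0) then - G a 0 else UNIV)" for a
  have "uncountable (P a)" for a
    unfolding P_def using uncountable_UNIV_real by simp
  moreover have "\<exists>a. P a = Q" if "perfect_set Q" "Q \<noteq> {}" for Q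
  proof -
    have "open (- Q)"
      using \<open>perfect_set Q\<close> unfolding perfect_set_def by auto
    then obtain a where "G a = (\<lambda>n. - Q)"
      using G[of "\<lambda>n. - Q"] by blast
    moreover have "uncountable Q"
      using perfect_set_uncountable[OF that] .
    ultimately have "P a = Q"
      unfolding P_def by simp
    then show ?thesis ..
  qed
  ultimately show thesis
    by (rule that)
qed

lemma countable_set_plus:
  fixes A B :: "'a::plus set"
  assumes "countable A" "countable B"
  shows "countable (A + B)"
  using assms by (simp add: set_plus_image)

lemma countable_imp_negligible:
  fixes A :: "'a::euclidean_space set"
  assumes "countable A"
  shows "negligible A"
proof -
  have "negligible (\<Union>x\<in>A. {x})"
    using assms by (intro negligible_countable_Union) auto
  then show ?thesis by simp
qed

lemma negligible_reflection:
  fixes N :: "real set"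
  assumes "negligible N"
  shows "negligible ((\<lambda>x. p - x) ` N)"
  by (rule negligible_differentiable_image_negligible[OF order_refl assms])
    (auto intro!: derivative_intros)

lemma exists_outside_countable:
  assumes "uncountable P" "countable C"
  obtains x where "x \<in> P" "x \<notin> C"
  using uncountable_minus_countable[OF assms] by (metis Diff_iff countable_empty ex_in_conv)

definition good_step ::
  "real set \<Rightarrow> real set \<Rightarrow> real set \<Rightarrow> real set \<Rightarrow> real \<Rightarrow> real \<Rightarrow> real \<Rightarrow> bool"
  where "good_step A D N P s t d \<longleftrightarrow>
    d \<in> P \<and> d \<notin> A + A \<and> s + t \<in> P \<and> s \<notin> N \<and> t \<notin> N \<and> s \<notin> A \<and>
    (\<forall>x\<in>{s, t}. \<forall>y\<in>A \<union> {s, t}. x + y \<notin> insert d D)"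

text \<open>A good stage exists when \<open>A\<close> and \<open>D\<close> are countable, \<open>N\<close> is null and \<open>P\<close> uncountable:
  pick \<open>d\<close> and a target sum \<open>p\<close> in \<open>P\<close> off countable sets, then \<open>s\<close> off a null set, \<open>t = p - s\<close>.\<close>

lemma good_step_exists:
  fixes A D N P :: "real set"
  assumes "countable A" "countable D" "negligible N" "uncountable P"
  shows "\<exists>s t d. good_step A D N P s t d"
proof -
  obtain d where d: "d \<in> P" "d \<notin> A + A"
    using exists_outside_countable[OF \<open>uncountable P\<close> countable_set_plus] assms(1) by metis
  define E where "E = insert d D"
  have "countable E"
    unfolding E_def using assms(2) by simp
  obtain p where p: "p \<in> P" "p \<notin> E"
    using exists_outside_countable[OF \<open>uncountable P\<close> \<open>countable E\<close>] by metis
  \<comment> \<open>The values of \<open>s\<close> for which some sum with a new summand would lie in \<open>E\<close>.\<close>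
  define C where "C = A \<union> (\<lambda>(e, y). e - y) ` (E \<times> A) \<union> (\<lambda>(e, y). p + y - e) ` (E \<times> A) \<union>
    (\<lambda>e. e / 2) ` E \<union> (\<lambda>e. p - e / 2) ` E"
  have "countable C"
    unfolding C_def using assms(1) \<open>countable E\<close>
    by (intro countable_Un countable_image countable_SIGMA) auto
  then have "negligible (N \<union> (\<lambda>x. p - x) ` N \<union> C)"
    by (intro negligible_Un[OF negligible_Un] assms(3) negligible_reflection
        countable_imp_negligible)
  then have "N \<union> (\<lambda>x. p - x) ` N \<union> C \<noteq> UNIV"
    using non_negligible_UNIV by metis
  then obtain s where s: "s \<notin> N \<union> (\<lambda>x. p - x) ` N \<union> C"
    by blast
  have s_out: "s \<notin> N" "s \<notin> (\<lambda>x. p - x) ` N" "s \<notin> A"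
    "s \<notin> (\<lambda>(e, y). e - y) ` (E \<times> A)" "s \<notin> (\<lambda>(e, y). p + y - e) ` (E \<times> A)"
    "s \<notin> (\<lambda>e. e / 2) ` E" "s \<notin> (\<lambda>e. p - e / 2) ` E"
    using s unfolding C_def by blast+
  define t where "t = p - s"
  have "t \<notin> N"
    using s_out(2) rev_image_eqI[of t N s "\<lambda>x. p - x"] unfolding t_def by auto
  have "s + y \<notin> E" "t + y \<notin> E" if "y \<in> A" for y
  proof -
    show "s + y \<notin> E"
      using s_out(4) rev_image_eqI[of "(s + y, y)" "E \<times> A" s "\<lambda>(e, y). e - y"] that by auto
    show "t + y \<notin> E"
      using s_out(5) rev_image_eqI[of "(t + y, y)" "E \<times> A" s "\<lambda>(e, y). p + y - e"] that
      unfolding t_def by auto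
  qed
  moreover have "s + s \<notin> E"
    using s_out(6) rev_image_eqI[of "s + s" E s "\<lambda>e. e / 2"] by auto
  moreover have "t + t \<notin> E"
    using s_out(7) rev_image_eqI[of "t + t" E s "\<lambda>e. p - e / 2"]
    unfolding t_def by (auto simp: field_simps)
  moreover have "s + t \<notin> E"
    using p unfolding t_def by simp
  ultimately have "good_step A D N P s t d"
    unfolding good_step_def E_def using d p s_out(1,3) \<open>t \<notin> N\<close>
    by (auto simp: add.commute t_def)
  then show ?thesis by blast
qed

lemma good_stepD:
  assumes "good_step A D N P s t d"
  shows "d \<in> P" "d \<notin> A + A" "s + t \<in> P" "s \<notin> N" "t \<notin> N" "s \<notin> A"
    and "x \<in> {s, t} \<Longrightarrow> y \<in> A \<union> {s, t} \<Longrightarrow> x + y \<notin> insert d D"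
  using assms unfolding good_step_def by auto

lemma wf_recursive_choice:
  assumes "wf R"
    and exists: "\<And>f a. \<exists>x. Q f a x"
    and local: "\<And>f g a. (\<And>b. (b, a) \<in> R \<Longrightarrow> f b = g b) \<Longrightarrow> Q f a = Q g a"
  shows "\<exists>F. \<forall>a. Q F a (F a)"
proof -
  define H where "H f a = (SOME x. Q f a x)" for f a
  have "adm_wf R H"
    unfolding adm_wf_def H_def by (metis local)
  then have fixpoint: "wfrec R H = H (wfrec R H)"
    by (rule wfrec_fixpoint[OF \<open>wf R\<close>])
  have "Q (wfrec R H) a (wfrec R H a)" for a
  proof -
    have "wfrec R H a = (SOME x. Q (wfrec R H) a x)"
      by (metis fixpoint H_def)
    then show ?thesis
      using someI_ex[OF exists] by simp
  qed
  then show ?thesis by blast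
qed

locale sum_avoiding_sequence =
  fixes R :: "('i \<times> 'i) set" and N P :: "'i \<Rightarrow> real set" and s t d :: "'i \<Rightarrow> real"
  assumes trans: "trans R" and total: "total R"
    and countable_below: "\<And>a. countable (below R a)"
    and step: "\<And>a. good_step (s ` below R a \<union> t ` below R a) (d ` below R a)
      (\<Union>(N ` insert a (below R a))) (P a) (s a) (t a) (d a)"
begin

definition S :: "real set"
  where "S = range s \<union> range t"

lemma earlier_summand:
  assumes "(b, a) \<in> R" "x \<in> {s b, t b}"
  shows "x \<in> s ` below R a \<union> t ` below R a"
  using assms unfolding below_def by blast

text \<open>Since each \<open>s a\<close> is new, \<open>s\<close> is injective and \<open>S\<close> is as large as the index type.\<close>

lemma inj_s: "inj s"
proof (rule injI, rule ccontr)
  fix a b assume "s a = s b" "a \<noteq> b"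
  have fresh: "s c \<notin> s ` below R c \<union> t ` below R c" for c
    using good_stepD(6)[OF step] .
  from \<open>a \<noteq> b\<close> consider "(a, b) \<in> R" | "(b, a) \<in> R"
    using total by (auto simp: total_on_def)
  then show False
    by cases (metis \<open>s a = s b\<close> earlier_summand fresh insertI1)+
qed

lemma uncountable_S:
  assumes "uncountable (UNIV :: 'i set)"
  shows "uncountable S"
proof -
  have "uncountable (range s)"
    using assms inj_s countable_image_inj_on by blast
  then show ?thesis
    unfolding S_def using countable_subset[OF Un_upper1] by blast
qed

text \<open>Only summands chosen before stage \<open>a\<close> can lie in \<open>N a\<close>.\<close>

lemma countable_S_inter_N: "countable (S \<inter> N a)"
proof -
  have "S \<inter> N a \<subseteq> s ` below R a \<union> t ` below R a"
  proof
    fix x assume x: "x \<in> S \<inter> N a"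
    then obtain b where b: "x \<in> {s b, t b}"
      unfolding S_def by blast
    show "x \<in> s ` below R a \<union> t ` below R a"
    proof (cases "(b, a) \<in> R")
      case True
      then show ?thesis using b earlier_summand by blast
    next
      case False
      then have "a \<in> insert b (below R b)"
        using total unfolding below_def total_on_def by blast
      moreover have "s b \<notin> \<Union>(N ` insert b (below R b))" "t b \<notin> \<Union>(N ` insert b (below R b))"
        using good_stepD(4,5)[OF step] by blast+
      ultimately show ?thesis using x b by blast
    qed
  qed
  moreover have "countable (s ` below R a \<union> t ` below R a)"
    using countable_below by simp
  ultimately show ?thesis
    by (rule countable_subset)
qed

text \<open>For the sum of
  summands from stages \<open>c \<le> b\<close> and the point \<open>d a\<close>: if \<open>a \<le> b\<close> this was arranged at stage
  \<open>b\<close>, and if \<open>b < a\<close> then \<open>d a\<close> was chosen outside the sums of earlier summands.\<close>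

lemma sum_not_excluded_ordered:
  assumes x: "x \<in> {s b, t b}" and y: "y \<in> {s c, t c}" and c: "c = b \<or> (c, b) \<in> R"
  shows "x + y \<noteq> d a"
proof (cases "a = b \<or> (a, b) \<in> R")
  case True
  have "y \<in> s ` below R b \<union> t ` below R b \<union> {s b, t b}"
    using c y earlier_summand by blast
  then have "x + y \<notin> insert (d b) (d ` below R b)"
    by (rule good_stepD(7)[OF step x])
  moreover have "d a \<in> insert (d b) (d ` below R b)"
    using True unfolding below_def by auto
  ultimately show ?thesis
    by auto
next
  case False
  then have "(b, a) \<in> R"
    using total unfolding total_on_def by blast
  moreover have "c = b \<or> (c, a) \<in> R"
    using c calculation trans unfolding trans_def by blast
  ultimately have "x \<in> s ` below R a \<union> t ` below R a" "y \<in> s ` below R a \<union> t ` below R a"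
    using x y earlier_summand by blast+
  then have "x + y \<in> (s ` below R a \<union> t ` below R a) + (s ` below R a \<union> t ` below R a)"
    by (rule set_plus_intro)
  then show ?thesis
    using good_stepD(2)[OF step] by auto
qed

lemma excluded_not_in_sumset: "d a \<notin> S + S"
proof
  assume "d a \<in> S + S"
  then obtain x y where "x \<in> S" "y \<in> S" "d a = x + y"
    by (auto elim: set_plus_elim)
  then obtain b c where x: "x \<in> {s b, t b}" and y: "y \<in> {s c, t c}"
    unfolding S_def by blast
  from total consider "c = b \<or> (c, b) \<in> R" | "b = c \<or> (b, c) \<in> R"
    unfolding total_on_def by blast
  then show False
  proof cases
    case 1
    then show False
      using sum_not_excluded_ordered[OF x y 1, of a] \<open>d a = x + y\<close> by simp
  next
    case 2
    then show False
      using sum_not_excluded_ordered[OF y x 2, of a] \<open>d a = x + y\<close> by (simp add: add.commute)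
  qed
qed

lemma sumset_meets_and_misses_P: "(S + S) \<inter> P a \<noteq> {}" "P a - (S + S) \<noteq> {}"
proof -
  have "s a + t a \<in> S + S"
    unfolding S_def by (intro set_plus_intro) auto
  then show "(S + S) \<inter> P a \<noteq> {}"
    using good_stepD(3)[OF step] by blast
  show "P a - (S + S) \<noteq> {}"
    using excluded_not_in_sumset good_stepD(1)[OF step] by blast
qed

end

theorem sum_avoiding_construction:
  fixes R :: "('i \<times> 'i) set" and N P :: "'i \<Rightarrow> real set"
  assumes "wf R" "trans R" "total R" "\<And>a. countable (below R a)"
    and "uncountable (UNIV :: 'i set)"
    and "\<And>a. negligible (N a)" "\<And>a. uncountable (P a)"
  shows "\<exists>S. uncountable S \<and> (\<forall>a. countable (S \<inter> N a)) \<and>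
    (\<forall>a. (S + S) \<inter> P a \<noteq> {} \<and> P a - (S + S) \<noteq> {})"
proof -
  define Q where "Q f a x \<longleftrightarrow>
    good_step ((fst \<circ> f) ` below R a \<union> (fst \<circ> snd \<circ> f) ` below R a) ((snd \<circ> snd \<circ> f) ` below R a)
      (\<Union>(N ` insert a (below R a))) (P a) (fst x) (fst (snd x)) (snd (snd x))"
    for f :: "'i \<Rightarrow> real \<times> real \<times> real" and a x
  have "\<exists>x. Q f a x" for f a
  proof -
    have "negligible (\<Union>(N ` insert a (below R a)))"
      using assms(4,6) by (intro negligible_countable_Union) auto
    then obtain s t d where "good_step ((fst \<circ> f) ` below R a \<union> (fst \<circ> snd \<circ> f) ` below R a)
      ((snd \<circ> snd \<circ> f) ` below R a) (\<Union>(N ` insert a (below R a))) (P a) s t d"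
      using good_step_exists assms(4,7) by (metis countable_Un countable_image)
    then show ?thesis
      unfolding Q_def by (metis fst_conv snd_conv)
  qed
  moreover have "Q f a = Q g a" if "\<And>b. (b, a) \<in> R \<Longrightarrow> f b = g b" for f g a
  proof -
    have "h ` below R a = h' ` below R a" if "\<And>b. b \<in> below R a \<Longrightarrow> h b = h' b"
      for h h' :: "'i \<Rightarrow> real"
      using that by (rule image_cong[OF refl])
    then show ?thesis
      unfolding Q_def using that by (simp add: below_def fun_eq_iff)
  qed
  ultimately obtain F where F: "\<And>a. Q F a (F a)"
    using wf_recursive_choice[OF \<open>wf R\<close>] by blast
  interpret sum_avoiding_sequence R N P "fst \<circ> F" "fst \<circ> snd \<circ> F" "snd \<circ> snd \<circ> F"
    using assms(2-4) F unfolding Q_def by unfold_locales auto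
  show ?thesis
    using uncountable_S[OF assms(5)] countable_S_inter_N sumset_meets_and_misses_P
    by (intro exI[of _ S]) simp
qed

theorem mainTheorem18:
  assumes "CH"
  shows "\<exists>S. sierpinski_set S \<and> bernstein_set {a + b | a b. a \<in> S \<and> b \<in> S}"
proof -
  obtain R :: "(real \<times> real) set"
    where R: "wf R" "trans R" "total R" "\<And>a. countable (below R a)"
    using CH_well_order_with_countable_initial_segments[OF assms] by metis
  obtain N :: "real \<Rightarrow> real set"
    where N: "\<And>a. negligible (N a)" "\<And>M. negligible M \<Longrightarrow> \<exists>a. M \<subseteq> N a"
    using null_set_family by blast
  obtain P :: "real \<Rightarrow> real set"
    where P: "\<And>a. uncountable (P a)" "\<And>Q. perfect_set Q \<Longrightarrow> Q \<noteq> {} \<Longrightarrow> \<exists>a. P a = Q"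
    using perfect_set_family by blast
  obtain S where "uncountable S" and S_N: "\<forall>a. countable (S \<inter> N a)"
    and S_P: "\<forall>a. (S + S) \<inter> P a \<noteq> {} \<and> P a - (S + S) \<noteq> {}"
    using sum_avoiding_construction[where N = N and P = P, OF R uncountable_UNIV_real N(1) P(1)]
    by (elim exE conjE)
  have "sierpinski_set S"
    unfolding sierpinski_set_def
  proof (intro conjI ballI)
    show "S \<approx> (UNIV :: real set)"
      using assms \<open>uncountable S\<close> unfolding CH_def by blast
    fix M :: "real set" assume "M \<in> null_sets lebesgue"
    then obtain a where "M \<subseteq> N a"
      using N(2) negligible_iff_null_sets by blast
    then have "S \<inter> M \<subseteq> S \<inter> N a"
      by blast
    then show "countable (S \<inter> M)"
      using S_N countable_subset by metis
  qed
  moreover have "bernstein_set (S + S)"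
    unfolding bernstein_set_def using P(2) S_P by blast
  moreover have "{a + b | a b. a \<in> S \<and> b \<in> S} = S + S"
    by (auto simp: set_plus_def)
  ultimately show ?thesis
    by auto
qed

end
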